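(* Let $A$ be a unital algebra over $\mathbb{F}_2$ and let $\Omega^1$ extend to an exterior algebra $\Omega$ over $A$ at least up to degree 2 (product $\wedge$, differential ${\rm d}$ with ${\rm d}^2=0$ and graded Leibniz rule, generated by $A$ and ${\rm d} A$), and let $\theta\in\Omega^1$ satisfy ${\rm d}\theta=0$. Let $\bar A$ and $\bar\Omega^1$ be as follows: $\bar A$ is the set $A$ with $a\,\bar\cdot\,b=ab+a+b$, $a\,\bar+\,b=a+b+1$; $\bar\Omega^1$ is the set $\Omega^1$ with $\omega\,\bar+\,\eta=\theta+\omega+\eta$, $a\,\bar\cdot\,\omega=a\theta+(a+1)\omega$, $\omega\,\bar\cdot\,a=\theta a+\omega(a+1)$ and $\bar{\rm d} a=\theta+{\rm d} a$. (i) Let $\bar\Omega^2$ be the set $\Omega^2$ with $\omega\,\bar+\,\eta=\theta^2+\omega+\eta$, $a\,\bar\cdot\,\omega=a\theta^2+(a+1)\omega$, $\omega\,\bar\cdot\,a=\theta^2a+\omega(a+1)$ for $\omega,\eta\in\Omega^2$, $a\in A$, with product $\bar\Omega^1\times\bar\Omega^1\to\bar\Omega^2$ given by $\omega\,\bar\wedge\,\eta=\omega\wedge\eta+\theta\wedge\eta+\omega\wedge\theta$, and with $\bar{\rm d}\omega=\theta^2+{\rm d}\omega$ for $\omega\in\bar\Omega^1$ (where $\theta^2=\theta\wedge\theta$). Then $\bar A,\bar\Omega^1,\bar\Omega^2$ with these structures form the part up to degree 2 of an exterior algebra over $\bar A$. (ii) The map $\bar{\ }:\Omega^2\to\bar\Omega^2$,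 $\bar\omega=\theta^2+\omega$, together with $a\mapsto 1+a$ on $A$ and $\omega\mapsto\theta+\omega$ on $\Omega^1$, is a map of differential graded algebras up to degree 2.
   Context: Over $\mathbb{F}_2$ all signs in the graded Leibniz rule are irrelevant. A map of differential graded algebras up to degree 2 here means maps in degrees 0,1,2 that are additive, intertwine the products (including $\overline{\omega\wedge\eta}=\bar\omega\,\bar\wedge\,\bar\eta$ and the bimodule actions) and intertwine the differentials ($\overline{{\rm d} a}=\bar{\rm d}\bar a$, $\overline{{\rm d}\omega}=\bar{\rm d}\bar\omega$). *)

theory Defs
  imports Main
begin

text \<open>A differential graded algebra over F_2 truncated at degree 2, generated by
 degree 0 and its differentials ("exterior algebra up to degree 2").
 'a = degree 0 (the algebra A), 'b = degree 1, 'c = degree 2.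
 All structure is given explicitly so that the same carrier types can carry the
 deformed (barred) operations.\<close>

record ('a, 'b, 'c) ext2 =
  addA  :: "'a \<Rightarrow> 'a \<Rightarrow> 'a"
  mulA  :: "'a \<Rightarrow> 'a \<Rightarrow> 'a"
  zeroA :: 'a
  oneA  :: 'a
  add1  :: "'b \<Rightarrow> 'b \<Rightarrow> 'b"
  zero1 :: 'b
  lmul1 :: "'a \<Rightarrow> 'b \<Rightarrow> 'b"
  rmul1 :: "'b \<Rightarrow> 'a \<Rightarrow> 'b"
  add2  :: "'c \<Rightarrow> 'c \<Rightarrow> 'c"
  zero2 :: 'c
  lmul2 :: "'a \<Rightarrow> 'c \<Rightarrow> 'c"
  rmul2 :: "'c \<Rightarrow> 'a \<Rightarrow> 'c"
  wedge :: "'b \<Rightarrow> 'b \<Rightarrow> 'c"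
  d0    :: "'a \<Rightarrow> 'b"
  d1    :: "'b \<Rightarrow> 'c"

text \<open>An abelian group in which x + x = 0, i.e. an F_2-vector space.\<close>
definition f2_space :: "('x \<Rightarrow> 'x \<Rightarrow> 'x) \<Rightarrow> 'x \<Rightarrow> bool" where
  "f2_space add z \<longleftrightarrow>
     (\<forall>x y w. add (add x y) w = add x (add y w)) \<and>
     (\<forall>x y. add x y = add y x) \<and>
     (\<forall>x. add x z = x) \<and>
     (\<forall>x. add x x = z)"

definition bimod ::
  "('a \<Rightarrow> 'a \<Rightarrow> 'a) \<Rightarrow> ('a \<Rightarrow> 'a \<Rightarrow> 'a) \<Rightarrow> 'a \<Rightarrow>
   ('x \<Rightarrow> 'x \<Rightarrow> 'x) \<Rightarrow> ('a \<Rightarrow> 'x \<Rightarrow> 'x) \<Rightarrow> ('x \<Rightarrow> 'a \<Rightarrow> 'x) \<Rightarrow> bool" where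
  "bimod ad mu one add l r \<longleftrightarrow>
     (\<forall>a x y. l a (add x y) = add (l a x) (l a y)) \<and>
     (\<forall>a b x. l (ad a b) x = add (l a x) (l b x)) \<and>
     (\<forall>a b x. l (mu a b) x = l a (l b x)) \<and>
     (\<forall>x. l one x = x) \<and>
     (\<forall>a x y. r (add x y) a = add (r x a) (r y a)) \<and>
     (\<forall>a b x. r x (ad a b) = add (r x a) (r x b)) \<and>
     (\<forall>a b x. r x (mu a b) = r (r x a) b) \<and>
     (\<forall>x. r x one = x) \<and>
     (\<forall>a b x. l a (r x b) = r (l a x) b)"

definition gen1 :: "('a, 'b, 'c, 'z) ext2_scheme \<Rightarrow> 'b \<Rightarrow> bool" where
  "gen1 E w \<longleftrightarrow> (\<exists>xs. w = foldr (\<lambda>(a, b) acc. add1 E (lmul1 E a (d0 E b)) acc) xs (zero1 E))"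

definition gen2 :: "('a, 'b, 'c, 'z) ext2_scheme \<Rightarrow> 'c \<Rightarrow> bool" where
  "gen2 E w \<longleftrightarrow> (\<exists>xs. w = foldr (\<lambda>(a, b, c) acc.
       add2 E (lmul2 E a (wedge E (d0 E b) (d0 E c))) acc) xs (zero2 E))"

text \<open>Exterior algebra over the unital F_2-algebra (addA, mulA, zeroA, oneA), up to degree 2.
 Over F_2 all signs of the graded Leibniz rule are irrelevant.\<close>
definition ext_alg2 :: "('a, 'b, 'c, 'z) ext2_scheme \<Rightarrow> bool" where
  "ext_alg2 E \<longleftrightarrow>
     \<comment> \<open>unital associative algebra over F_2\<close>
     f2_space (addA E) (zeroA E) \<and>
     (\<forall>a b c. mulA E (mulA E a b) c = mulA E a (mulA E b c)) \<and>
     (\<forall>a. mulA E (oneA E) a = a) \<and> (\<forall>a. mulA E a (oneA E) = a) \<and>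
     (\<forall>a b c. mulA E a (addA E b c) = addA E (mulA E a b) (mulA E a c)) \<and>
     (\<forall>a b c. mulA E (addA E a b) c = addA E (mulA E a c) (mulA E b c)) \<and>
     \<comment> \<open>degree 1 and 2 bimodules\<close>
     f2_space (add1 E) (zero1 E) \<and>
     bimod (addA E) (mulA E) (oneA E) (add1 E) (lmul1 E) (rmul1 E) \<and>
     f2_space (add2 E) (zero2 E) \<and>
     bimod (addA E) (mulA E) (oneA E) (add2 E) (lmul2 E) (rmul2 E) \<and>
     \<comment> \<open>product of degree 1 forms: biadditive, associative with the degree 0 actions\<close>
     (\<forall>w x y. wedge E (add1 E w x) y = add2 E (wedge E w y) (wedge E x y)) \<and>
     (\<forall>w x y. wedge E w (add1 E x y) = add2 E (wedge E w x) (wedge E w y)) \<and>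
     (\<forall>a w x. wedge E (rmul1 E w a) x = wedge E w (lmul1 E a x)) \<and>
     (\<forall>a w x. lmul2 E a (wedge E w x) = wedge E (lmul1 E a w) x) \<and>
     (\<forall>a w x. rmul2 E (wedge E w x) a = wedge E w (rmul1 E x a)) \<and>
     \<comment> \<open>differential\<close>
     (\<forall>a b. d0 E (addA E a b) = add1 E (d0 E a) (d0 E b)) \<and>
     (\<forall>a b. d0 E (mulA E a b) = add1 E (rmul1 E (d0 E a) b) (lmul1 E a (d0 E b))) \<and>
     (\<forall>w x. d1 E (add1 E w x) = add2 E (d1 E w) (d1 E x)) \<and>
     (\<forall>a w. d1 E (lmul1 E a w) = add2 E (wedge E (d0 E a) w) (lmul2 E a (d1 E w))) \<and>
     (\<forall>a w. d1 E (rmul1 E w a) = add2 E (rmul2 E (d1 E w) a) (wedge E w (d0 E a))) \<and>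
     (\<forall>a. d1 E (d0 E a) = zero2 E) \<and>
     \<comment> \<open>generated by A and dA\<close>
     (\<forall>w. gen1 E w) \<and> (\<forall>w. gen2 E w)"

definition dga2_map ::
  "('a, 'b, 'c, 'z) ext2_scheme \<Rightarrow> ('a2, 'b2, 'c2, 'z2) ext2_scheme \<Rightarrow>
   ('a \<Rightarrow> 'a2) \<Rightarrow> ('b \<Rightarrow> 'b2) \<Rightarrow> ('c \<Rightarrow> 'c2) \<Rightarrow> bool" where
  "dga2_map E F f0 f1 f2 \<longleftrightarrow>
     (\<forall>a b. f0 (addA E a b) = addA F (f0 a) (f0 b)) \<and>
     (\<forall>w x. f1 (add1 E w x) = add1 F (f1 w) (f1 x)) \<and>
     (\<forall>w x. f2 (add2 E w x) = add2 F (f2 w) (f2 x)) \<and>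
     (\<forall>a b. f0 (mulA E a b) = mulA F (f0 a) (f0 b)) \<and>
     (\<forall>a w. f1 (lmul1 E a w) = lmul1 F (f0 a) (f1 w)) \<and>
     (\<forall>a w. f1 (rmul1 E w a) = rmul1 F (f1 w) (f0 a)) \<and>
     (\<forall>a w. f2 (lmul2 E a w) = lmul2 F (f0 a) (f2 w)) \<and>
     (\<forall>a w. f2 (rmul2 E w a) = rmul2 F (f2 w) (f0 a)) \<and>
     (\<forall>w x. f2 (wedge E w x) = wedge F (f1 w) (f1 x)) \<and>
     (\<forall>a. f1 (d0 E a) = d0 F (f0 a)) \<and>
     (\<forall>w. f2 (d1 E w) = d1 F (f1 w))"

definition bar_ext :: "('a, 'b, 'c, 'z) ext2_scheme \<Rightarrow> 'b \<Rightarrow> ('a, 'b, 'c) ext2" where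
  "bar_ext E \<theta> = (let \<theta>2 = wedge E \<theta> \<theta>; pA = addA E; p1 = add1 E; p2 = add2 E;
       one = oneA E in
    \<lparr> addA = (\<lambda>a b. pA (pA a b) one),
      mulA = (\<lambda>a b. pA (pA (mulA E a b) a) b),
      zeroA = one,
      oneA = zeroA E,
      add1 = (\<lambda>w x. p1 (p1 \<theta> w) x),
      zero1 = \<theta>,
      lmul1 = (\<lambda>a w. p1 (lmul1 E a \<theta>) (lmul1 E (pA a one) w)),
      rmul1 = (\<lambda>w a. p1 (rmul1 E \<theta> a) (rmul1 E w (pA a one))),
      add2 = (\<lambda>w x. p2 (p2 \<theta>2 w) x),
      zero2 = \<theta>2,
      lmul2 = (\<lambda>a w. p2 (lmul2 E a \<theta>2) (lmul2 E (pA a one) w)),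
      rmul2 = (\<lambda>w a. p2 (rmul2 E \<theta>2 a) (rmul2 E w (pA a one))),
      wedge = (\<lambda>w x. p2 (p2 (wedge E w x) (wedge E \<theta> x)) (wedge E w \<theta>)),
      d0 = (\<lambda>a. p1 \<theta> (d0 E a)),
      d1 = (\<lambda>w. p2 \<theta>2 (d1 E w)) \<rparr>)"

end

theory Submission
  imports Defs
begin

text \<open>Over \<open>F\<^sub>2\<close> every translation \<open>x \<mapsto> c + x\<close> is an involution, and the barred
  structure is precisely the structure transported from \<open>E\<close> along the translations by
  \<open>1\<close>, \<open>\<theta>\<close> and \<open>\<theta>\<and>\<theta>\<close>: for instance \<open>1 + (1 + a)(1 + b) = ab + a + b\<close> and
  \<open>\<theta>\<and>\<theta> + (\<theta> + \<omega>)\<and>(\<theta> + \<eta>) = \<omega>\<and>\<eta> + \<theta>\<and>\<eta> + \<omega>\<and>\<theta>\<close>.  The transported differentials are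
  \<open>\<theta> + d(1 + a) = \<theta> + da\<close> and \<open>\<theta>\<and>\<theta> + d(\<theta> + \<omega>) = \<theta>\<and>\<theta> + d\<omega>\<close>, using \<open>d(1) = 0\<close> and \<open>d\<theta> = 0\<close>.
  Transport of structure along bijections preserves all axioms of an exterior algebra,
  generation included, and turns the bijections into a map of differential graded algebras.\<close>

lemma f2_spaceD:
  assumes "f2_space add z"
  shows "add (add x y) w = add x (add y w)" "add x y = add y x"
    "add x (add y w) = add y (add x w)" "add x x = z" "add x (add x y) = y"
    "add x z = x" "add z x = x"
proof -
  from assms have assoc: "\<And>x y w. add (add x y) w = add x (add y w)"
    and comm: "\<And>x y. add x y = add y x" and zero: "\<And>x. add x z = x"
    and self: "\<And>x. add x x = z"
    unfolding f2_space_def by blast+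
  show "add (add x y) w = add x (add y w)" "add x y = add y x" "add x x = z" "add x z = x"
    by (fact assoc comm self zero)+
  show "add x (add y w) = add y (add x w)"
    using assoc[of x y w] assoc[of y x w] comm[of x y] by simp
  show "add x (add x y) = y"
    using assoc[of x x y] self[of x] comm[of z y] zero[of y] by simp
  show "add z x = x"
    using comm[of z x] zero[of x] by simp
qed

lemma inv_f2_translation:
  assumes "f2_space add z"
  shows "inv (add x) = add x"
  by (rule inv_equality) (simp_all add: f2_spaceD(5)[OF assms])

lemma bij_f2_translation:
  assumes "f2_space add z"
  shows "bij (add x)"
  by (rule o_bij[of "add x"]) (simp_all add: fun_eq_iff f2_spaceD(5)[OF assms])

definition transport_ext2 ::
  "('a, 'b, 'c, 'z) ext2_scheme \<Rightarrow> ('a \<Rightarrow> 'a2) \<Rightarrow> ('b \<Rightarrow> 'b2) \<Rightarrow> ('c \<Rightarrow> 'c2) \<Rightarrow>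
   ('a2, 'b2, 'c2) ext2" where
  "transport_ext2 E f0 f1 f2 =
    \<lparr> addA = (\<lambda>a b. f0 (addA E (inv f0 a) (inv f0 b))),
      mulA = (\<lambda>a b. f0 (mulA E (inv f0 a) (inv f0 b))),
      zeroA = f0 (zeroA E),
      oneA = f0 (oneA E),
      add1 = (\<lambda>w x. f1 (add1 E (inv f1 w) (inv f1 x))),
      zero1 = f1 (zero1 E),
      lmul1 = (\<lambda>a w. f1 (lmul1 E (inv f0 a) (inv f1 w))),
      rmul1 = (\<lambda>w a. f1 (rmul1 E (inv f1 w) (inv f0 a))),
      add2 = (\<lambda>w x. f2 (add2 E (inv f2 w) (inv f2 x))),
      zero2 = f2 (zero2 E),
      lmul2 = (\<lambda>a w. f2 (lmul2 E (inv f0 a) (inv f2 w))),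
      rmul2 = (\<lambda>w a. f2 (rmul2 E (inv f2 w) (inv f0 a))),
      wedge = (\<lambda>w x. f2 (wedge E (inv f1 w) (inv f1 x))),
      d0 = (\<lambda>a. f1 (d0 E (inv f0 a))),
      d1 = (\<lambda>w. f2 (d1 E (inv f1 w))) \<rparr>"

lemma dga2_map_transport_ext2:
  assumes "inj f0" "inj f1" "inj f2"
  shows "dga2_map E (transport_ext2 E f0 f1 f2) f0 f1 f2"
  using assms by (simp add: dga2_map_def transport_ext2_def inv_f_f)

lemma inv_foldr_gen1_transport_ext2:
  assumes "F = transport_ext2 E f0 f1 f2" "inj f0" "inj f1"
  shows "inv f1 (foldr (\<lambda>(a, b) acc. add1 F (lmul1 F a (d0 F b)) acc)
      (map (\<lambda>(a, b). (f0 a, f0 b)) xs) (zero1 F)) =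
    foldr (\<lambda>(a, b) acc. add1 E (lmul1 E a (d0 E b)) acc) xs (zero1 E)"
  using assms by (induction xs) (auto simp: transport_ext2_def inv_f_f)

lemma inv_foldr_gen2_transport_ext2:
  assumes "F = transport_ext2 E f0 f1 f2" "inj f0" "inj f1" "inj f2"
  shows "inv f2 (foldr (\<lambda>(a, b, c) acc. add2 F (lmul2 F a (wedge F (d0 F b) (d0 F c))) acc)
      (map (\<lambda>(a, b, c). (f0 a, f0 b, f0 c)) xs) (zero2 F)) =
    foldr (\<lambda>(a, b, c) acc. add2 E (lmul2 E a (wedge E (d0 E b) (d0 E c))) acc) xs (zero2 E)"
  using assms by (induction xs) (auto simp: transport_ext2_def inv_f_f)

lemma gen1_transport_ext2:
  assumes "\<forall>v. gen1 E v" "inj f0" "bij f1"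
  shows "gen1 (transport_ext2 E f0 f1 f2) w"
proof -
  define F where "F = transport_ext2 E f0 f1 f2"
  obtain xs where "inv f1 w = foldr (\<lambda>(a, b) acc. add1 E (lmul1 E a (d0 E b)) acc) xs (zero1 E)"
    using assms(1) unfolding gen1_def by blast
  then have "inv f1 w = inv f1 (foldr (\<lambda>(a, b) acc. add1 F (lmul1 F a (d0 F b)) acc)
      (map (\<lambda>(a, b). (f0 a, f0 b)) xs) (zero1 F))"
    using inv_foldr_gen1_transport_ext2[OF F_def assms(2) bij_is_inj[OF assms(3)]] by simp
  then show ?thesis
    unfolding F_def gen1_def using inj_onD[OF bij_is_inj[OF bij_imp_bij_inv[OF assms(3)]]] by blast
qed

lemma gen2_transport_ext2:
  assumes "\<forall>v. gen2 E v" "inj f0" "inj f1" "bij f2"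
  shows "gen2 (transport_ext2 E f0 f1 f2) w"
proof -
  define F where "F = transport_ext2 E f0 f1 f2"
  obtain xs where "inv f2 w = foldr (\<lambda>(a, b, c) acc.
      add2 E (lmul2 E a (wedge E (d0 E b) (d0 E c))) acc) xs (zero2 E)"
    using assms(1) unfolding gen2_def by blast
  then have "inv f2 w = inv f2 (foldr (\<lambda>(a, b, c) acc.
      add2 F (lmul2 F a (wedge F (d0 F b) (d0 F c))) acc)
      (map (\<lambda>(a, b, c). (f0 a, f0 b, f0 c)) xs) (zero2 F))"
    using inv_foldr_gen2_transport_ext2[OF F_def assms(2,3) bij_is_inj[OF assms(4)]] by simp
  then show ?thesis
    unfolding F_def gen2_def using inj_onD[OF bij_is_inj[OF bij_imp_bij_inv[OF assms(4)]]] by blast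
qed

lemma f2_space_transport:
  assumes "f2_space add z" "bij f"
  shows "f2_space (\<lambda>x y. f (add (inv f x) (inv f y))) (f z)"
proof -
  have inv: "inv f (f x) = x" "f (inv f y) = y" for x y
    using assms(2) by (simp_all add: bij_is_inj bij_is_surj inv_f_f surj_f_inv_f)
  show ?thesis
    unfolding f2_space_def
    by (intro conjI allI)
      (simp_all add: inv f2_spaceD(1,4,6)[OF assms(1)], simp add: f2_spaceD(2)[OF assms(1)])
qed

lemma bimod_transport:
  assumes "bimod ad mu one add l r" "bij f0" "bij f"
  shows "bimod (\<lambda>a b. f0 (ad (inv f0 a) (inv f0 b))) (\<lambda>a b. f0 (mu (inv f0 a) (inv f0 b)))
    (f0 one) (\<lambda>x y. f (add (inv f x) (inv f y)))
    (\<lambda>a x. f (l (inv f0 a) (inv f x))) (\<lambda>x a. f (r (inv f x) (inv f0 a)))"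
  using assms unfolding bimod_def
  by (simp add: bij_is_inj bij_is_surj inv_f_f surj_f_inv_f)

lemma ext_alg2_transport_ext2:
  assumes E: "ext_alg2 E" and bij: "bij f0" "bij f1" "bij f2"
  shows "ext_alg2 (transport_ext2 E f0 f1 f2)"
proof -
  from E have "\<forall>v. gen1 E v" "\<forall>v. gen2 E v"
    unfolding ext_alg2_def by simp_all
  then have gen: "\<forall>w. gen1 (transport_ext2 E f0 f1 f2) w" "\<forall>u. gen2 (transport_ext2 E f0 f1 f2) u"
    using gen1_transport_ext2[OF _ bij_is_inj[OF bij(1)] bij(2)]
      gen2_transport_ext2[OF _ bij_is_inj[OF bij(1)] bij_is_inj[OF bij(2)] bij(3)] by blast+
  have "f2_space (addA E) (zeroA E)" "f2_space (add1 E) (zero1 E)" "f2_space (add2 E) (zero2 E)"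
    and "bimod (addA E) (mulA E) (oneA E) (add1 E) (lmul1 E) (rmul1 E)"
    and "bimod (addA E) (mulA E) (oneA E) (add2 E) (lmul2 E) (rmul2 E)"
    using E unfolding ext_alg2_def by blast+
  note spaces = f2_space_transport[OF this(1) bij(1)] f2_space_transport[OF this(2) bij(2)]
    f2_space_transport[OF this(3) bij(3)]
    and bimods = bimod_transport[OF this(4) bij(1,2)] bimod_transport[OF this(5) bij(1,3)]
  from E gen spaces bimods show ?thesis
    unfolding ext_alg2_def
    by (simp add: transport_ext2_def bij_is_inj bij_is_surj inv_f_f surj_f_inv_f bij)
qed

lemma ext_alg2_d0_one:
  assumes "ext_alg2 E"
  shows "d0 E (oneA E) = zero1 E"
proof -
  from assms have d0_mult: "d0 E (mulA E a b) = add1 E (rmul1 E (d0 E a) b) (lmul1 E a (d0 E b))"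
    and one_mult: "mulA E (oneA E) (oneA E) = oneA E" and space: "f2_space (add1 E) (zero1 E)"
    and bimod: "bimod (addA E) (mulA E) (oneA E) (add1 E) (lmul1 E) (rmul1 E)" for a b
    unfolding ext_alg2_def by simp_all
  from bimod have lmul_one: "lmul1 E (oneA E) w = w" and rmul_one: "rmul1 E w (oneA E) = w" for w
    unfolding bimod_def by simp_all
  have "d0 E (oneA E) = d0 E (mulA E (oneA E) (oneA E))"
    by (simp only: one_mult)
  also have "\<dots> = add1 E (d0 E (oneA E)) (d0 E (oneA E))"
    by (simp only: d0_mult lmul_one rmul_one)
  also have "\<dots> = zero1 E"
    by (rule f2_spaceD(4)[OF space])
  finally show ?thesis .
qed

lemma bar_ext_eq_transport_ext2:
  assumes E: "ext_alg2 E" and closed: "d1 E \<theta> = zero2 E"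
  shows "bar_ext E \<theta> = transport_ext2 E (addA E (oneA E)) (add1 E \<theta>) (add2 E (wedge E \<theta> \<theta>))"
proof -
  from E have sA: "f2_space (addA E) (zeroA E)" and s1: "f2_space (add1 E) (zero1 E)"
    and s2: "f2_space (add2 E) (zero2 E)"
    unfolding ext_alg2_def by simp_all
  from E show ?thesis
    unfolding ext_alg2_def bimod_def bar_ext_def transport_ext2_def Let_def
      inv_f2_translation[OF sA] inv_f2_translation[OF s1] inv_f2_translation[OF s2]
    by (simp add: fun_eq_iff f2_spaceD[OF sA] f2_spaceD[OF s1] f2_spaceD[OF s2]
        ext_alg2_d0_one[OF E] closed)
qed

theorem lemma5p4:
  fixes E :: "('a, 'b, 'c) ext2" and \<theta> :: 'b
  assumes "ext_alg2 E"
    and "d1 E \<theta> = zero2 E"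
  shows "ext_alg2 (bar_ext E \<theta>) \<and>
         dga2_map E (bar_ext E \<theta>)
           (\<lambda>a. addA E (oneA E) a)
           (\<lambda>w. add1 E \<theta> w)
           (\<lambda>w. add2 E (wedge E \<theta> \<theta>) w)"
proof -
  from assms(1) have "f2_space (addA E) (zeroA E)" "f2_space (add1 E) (zero1 E)"
    "f2_space (add2 E) (zero2 E)"
    unfolding ext_alg2_def by simp_all
  note bij_shifts = this[THEN bij_f2_translation]
  show ?thesis
    unfolding bar_ext_eq_transport_ext2[OF assms]
    using ext_alg2_transport_ext2[OF assms(1) bij_shifts]
      dga2_map_transport_ext2[OF bij_shifts[THEN bij_is_inj]]
    by blast
qed

end
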